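(* Let $\alpha=(\alpha_1,\dots,\alpha_\ell)$ be a composition. The antipode $\mathcal{S}$ of $\mathrm{QSym}$ acts on the shuffle basis by $$\mathcal{S}(S_\alpha)=(-1)^{\ell}S_{(\alpha_\ell,\dots,\alpha_1)}.$$
   Context: $\mathrm{QSym}$ is the Hopf algebra of quasisymmetric functions with monomial basis $M_\alpha$, product given by quasi-shuffle of compositions and coproduct $\Delta(M_\alpha)=\sum_{\beta\gamma=\alpha}M_\beta\otimes M_\gamma$ (deconcatenation). For a composition $\alpha=(\alpha_1,\dots,\alpha_\ell)$, $\mathrm{OtE}(\alpha)=\{i:\alpha_i\text{ odd},\alpha_{i+1}\text{ even}\}$; if $\mathrm{OtE}(\alpha)=\{i_1<\dots<i_k\}$ then $m_o(\alpha)=(\alpha_1+\cdots+\alpha_{i_1},\alpha_{i_1+1}+\cdots+\alpha_{i_2},\dots,\alpha_{i_k+1}+\cdots+\alpha_\ell)$. For $m_o(\alpha)\le\beta\le\alpha$ (refinement order), each part $\beta_i$ is a sum of a consecutive block of parts of $\alpha$; with $\mathrm{O}_\alpha^\beta(i)$, $\mathrm{E}_\alpha^\beta(i)$ the numbers of odd and even parts in that block, $c_\alpha^\beta=\prod_i \frac{1}{\mathrm{O}_\alpha^\beta(i)!\,\mathrm{E}_\alpha^\beta(i)!}$. The shuffle basis is $S_\alpha=\sum_{m_o(\alpha)\le\beta\le\alpha}c_\alpha^\beta M_\beta$. It satisfies $S_\alpha\cdot S_\beta=\sum_{\gamma}S_\gamma$, the sum over the multiset of all shuffles $\gamma$ of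 the sequences $\alpha$ and $\beta$ (interleavings preserving the relative order of parts of each), and $\Delta(S_\alpha)=\sum_{\beta\gamma=\alpha}S_\beta\otimes S_\gamma$; hence $\mathrm{QSym}$ is a shuffle algebra in this basis. *)

theory Defs
  imports Complex_Main
begin

definition is_comp :: "nat list \<Rightarrow> bool" where
  "is_comp a \<longleftrightarrow> (\<forall>x\<in>set a. 0 < x)"

definition comps :: "nat \<Rightarrow> nat list set" where
  "comps n = {a. is_comp a \<and> sum_list a = n}"

text \<open>Elements of QSym (graded completion): coefficient functions w.r.t. the
  monomial basis, indexed by compositions.\<close>
type_synonym qsym = "nat list \<Rightarrow> rat"

definition Mb :: "nat list \<Rightarrow> qsym" where
  "Mb a = (\<lambda>g. if g = a then 1 else 0)"

text \<open>Quasi-shuffle of two compositions, as a list (multiset) of compositions.\<close>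
fun qsh :: "nat list \<Rightarrow> nat list \<Rightarrow> nat list list" where
  "qsh [] b = [b]"
| "qsh a [] = [a]"
| "qsh (x # a) (y # b) =
     map ((#) x) (qsh a (y # b)) @ map ((#) y) (qsh (x # a) b) @ map ((#) (x + y)) (qsh a b)"

text \<open>Product of QSym: bilinear extension of M_a * M_b = sum over quasi-shuffles.\<close>
definition qmult :: "qsym \<Rightarrow> qsym \<Rightarrow> qsym" where
  "qmult f g = (\<lambda>c. \<Sum>(a, b) \<in> {(a, b). is_comp a \<and> is_comp b \<and> sum_list a + sum_list b = sum_list c}.
                      f a * g b * of_nat (count_list (qsh a b) c))"

text \<open>Antipode on the monomial basis, determined by the antipode axiom
  m (S \<otimes> id) \<Delta> = \<eta> \<epsilon> with deconcatenation coproduct: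
  sum over a = b c of S(M_b) M_c equals M_[] if a = [] and 0 otherwise.\<close>
function antM :: "nat list \<Rightarrow> qsym" where
  "antM a = (if a = [] then Mb []
             else (\<lambda>c. - (\<Sum>i<length a. qmult (antM (take i a)) (Mb (drop i a)) c)))"
  by auto
termination by (relation "measure length") auto

text \<open>Linear extension of the antipode (it preserves degree).\<close>
definition antipode :: "qsym \<Rightarrow> qsym" where
  "antipode f = (\<lambda>c. \<Sum>a \<in> comps (sum_list c). f a * antM a c)"

text \<open>Interior partial sums; refinement order: qleq b a (b \<le> a) iff a refines b.\<close>
definition psums :: "nat list \<Rightarrow> nat set" where
  "psums a = {sum_list (take i a) | i. 0 < i \<and> i < length a}"

definition qleq :: "nat list \<Rightarrow> nat list \<Rightarrow> bool" where
  "qleq b a \<longleftrightarrow> is_comp a \<and> is_comp b \<and> sum_list b = sum_list a \<and> psums b \<subseteq> psums a"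

definition OtE :: "nat list \<Rightarrow> nat set" where
  "OtE a = {i. 1 \<le> i \<and> i < length a \<and> odd (a ! (i - 1)) \<and> even (a ! i)}"

definition m_o :: "nat list \<Rightarrow> nat list" where
  "m_o a = (if a = [] then [] else let ks = sorted_list_of_set (OtE a); cuts = 0 # ks @ [length a] in
            map (\<lambda>j. sum_list (take (cuts ! (j + 1) - cuts ! j) (drop (cuts ! j) a)))
                [0..<length ks + 1])"

text \<open>Blocks of a corresponding to the parts of a coarsening b.\<close>
fun blk :: "nat list \<Rightarrow> nat list \<Rightarrow> nat list list" where
  "blk a [] = []"
| "blk a (x # bs) = (let k = (LEAST k. sum_list (take k a) = x) in take k a # blk (drop k a) bs)"

definition cc :: "nat list \<Rightarrow> nat list \<Rightarrow> rat" where
  "cc a b = prod_list (map (\<lambda>B. 1 / (of_nat (fact (length (filter odd B)))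
                                   * of_nat (fact (length (filter even B))))) (blk a b))"

definition Sb :: "nat list \<Rightarrow> qsym" where
  "Sb a = (\<lambda>b. if qleq (m_o a) b \<and> qleq b a then cc a b else 0)"

end

theory Submission
  imports Defs
begin

text \<open>
  Expand S_alpha as a sum over the segmentations of alpha into blocks in which no odd part is
  followed by an even part, each weighted by the product over its blocks of 1/(#odd! #even!),
  and expand the antipode of M_beta by the formula of Ehrenborg and Malvenuto-Reutenauer as
  (-1)^l(beta) times the sum of M_gamma over the coarsenings gamma of the reversal of beta.
  After reversing alpha, the antipode of S_alpha becomes a sum over a segmentation of rev alpha
  together with a grouping of its blocks. Summing first over the segmentations inside each block
  B of the coarse segmentation leaves the sum, over the segmentations of B into blocks C in which
  no even part is followed by an odd part, of the products of -1/(#odd(C)! #even(C)!). This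
  inversion sum equals (-1)^|B|/(#odd(B)! #even(B)!) if no odd part of B is followed by an even
  part, and 0 otherwise; what remains is the expansion of (-1)^l(alpha) S_(rev alpha).
\<close>

section \<open>Segmentations of a list\<close>

fun segs :: "'a list \<Rightarrow> 'a list list list" where
  "segs [] = [[]]"
| "segs (y # r) = map (\<lambda>p. [y] # p) (segs r) @
     map (\<lambda>p. (y # hd p) # tl p) (filter (\<lambda>p. p \<noteq> []) (segs r))"

lemma mem_segs_iff: "P \<in> set (segs x) \<longleftrightarrow> concat P = x \<and> [] \<notin> set P"
proof (induction x arbitrary: P)
  case Nil
  show ?case by (cases P) auto
next
  case (Cons y r)
  show ?case
  proof
    assume "P \<in> set (segs (y # r))"
    then consider p where "p \<in> set (segs r)" "P = [y] # p"
      | B q where "B # q \<in> set (segs r)" "P = (y # B) # q"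
      by (auto simp: neq_Nil_conv)
    then show "concat P = y # r \<and> [] \<notin> set P"
      by cases (simp_all add: Cons.IH)
  next
    assume P: "concat P = y # r \<and> [] \<notin> set P"
    then obtain B P' where P_eq: "P = B # P'" and "B \<noteq> []"
      by (cases P) auto
    with P obtain B' where B: "B = y # B'" and r: "r = B' @ concat P'"
      by (cases B) auto
    show "P \<in> set (segs (y # r))"
    proof (cases "B' = []")
      case True
      then show ?thesis using P P_eq B r Cons.IH by simp
    next
      case False
      then have "B' # P' \<in> set (segs r)" using P P_eq B r Cons.IH by simp
      then show ?thesis using P_eq B by (auto intro!: image_eqI[where x="B' # P'"])
    qed
  qed
qed

lemma distinct_segs: "distinct (segs x)"
proof (induction x)
  case Nil
  then show ?case by simp
next
  case (Cons y r)
  have "inj_on (\<lambda>p. (y # hd p) # tl p) {p. p \<noteq> []}"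
    by (auto simp: inj_on_def neq_Nil_conv)
  then have "distinct (map (\<lambda>p. (y # hd p) # tl p) (filter (\<lambda>p. p \<noteq> []) (segs r)))"
    using Cons by (auto simp: distinct_map intro: inj_on_subset)
  moreover have "distinct (map (\<lambda>p. [y] # p) (segs r))"
    using Cons by (simp add: distinct_map)
  moreover have "[y] # p \<noteq> (y # hd q) # tl q" if "q \<in> set (segs r)" "q \<noteq> []" for p q
    using that mem_segs_iff[of q r] by (metis hd_in_set list.inject)
  then have "set (map (\<lambda>p. [y] # p) (segs r)) \<inter>
      set (map (\<lambda>p. (y # hd p) # tl p) (filter (\<lambda>p. p \<noteq> []) (segs r))) = {}"
    by force
  ultimately show ?case
    by (simp only: segs.simps distinct_append)
qed

definition seg_sum :: "'a list \<Rightarrow> ('a list list \<Rightarrow> 'b::comm_ring_1) \<Rightarrow> 'b" where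
  "seg_sum x F = sum_list (map F (segs x))"

lemma seg_sum_eq_sum: "seg_sum x F = (\<Sum>P | concat P = x \<and> [] \<notin> set P. F P)"
proof -
  have "set (segs x) = {P. concat P = x \<and> [] \<notin> set P}"
    using mem_segs_iff by blast
  then show ?thesis
    unfolding seg_sum_def using distinct_segs by (metis sum_list_distinct_conv_sum_set)
qed

lemma seg_sum_Nil [simp]: "seg_sum [] F = F []"
  by (simp add: seg_sum_def)

lemma seg_sum_Cons:
  "seg_sum (y # r) F = seg_sum r (\<lambda>p. F ([y] # p) + (if p = [] then 0 else F ((y # hd p) # tl p)))"
proof -
  have filter_ne: "sum_list (map G (filter (\<lambda>p. p \<noteq> []) xs)) = sum_list (map (\<lambda>p. if p = [] then 0 else G p) xs)"
    for G and xs
    by (induction xs) auto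
  show ?thesis
    by (simp add: seg_sum_def filter_ne sum_list_addf o_def)
qed

lemma seg_sum_singleton [simp]: "seg_sum [y] F = F [[y]]"
  by (simp add: seg_sum_Cons)

lemma seg_sum_add: "seg_sum x (\<lambda>p. F p + G p) = seg_sum x F + seg_sum x G"
  by (simp add: seg_sum_def sum_list_addf)

lemma seg_sum_mult_left: "seg_sum x (\<lambda>p. c * F p) = c * seg_sum x F"
  by (simp add: seg_sum_def sum_list_const_mult)

lemma seg_sum_mult_right: "seg_sum x (\<lambda>p. F p * c) = seg_sum x F * c"
  by (simp add: seg_sum_def sum_list_mult_const)

lemma seg_sum_cong:
  "(\<And>P. concat P = x \<Longrightarrow> [] \<notin> set P \<Longrightarrow> F P = G P) \<Longrightarrow> seg_sum x F = seg_sum x G"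
  unfolding seg_sum_eq_sum by (rule sum.cong) auto

lemma seg_sum_zero: "(\<And>P. concat P = x \<Longrightarrow> [] \<notin> set P \<Longrightarrow> F P = 0) \<Longrightarrow> seg_sum x F = 0"
  unfolding seg_sum_eq_sum by (rule sum.neutral) auto

lemma sum_seg_sum_swap: "(\<Sum>a\<in>A. seg_sum x (h a)) = seg_sum x (\<lambda>p. \<Sum>a\<in>A. h a p)"
proof -
  have "(\<Sum>a\<in>A. sum_list (map (h a) L)) = sum_list (map (\<lambda>p. \<Sum>a\<in>A. h a p) L)" for L
    by (induction L) (auto simp: sum.distrib)
  then show ?thesis unfolding seg_sum_def .
qed

lemma seg_sum_map: "seg_sum (map f x) F = seg_sum x (\<lambda>P. F (map (map f) P))"
proof -
  have "segs (map f x) = map (map (map f)) (segs x)"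
  proof (induction x)
    case (Cons y r)
    have "\<And>p. p \<noteq> [] \<Longrightarrow> (f y # hd (map (map f) p)) # tl (map (map f) p) = map (map f) ((y # hd p) # tl p)"
      by (simp add: hd_map map_tl)
    then show ?case using Cons by (simp add: filter_map o_def)
  qed simp
  then show ?thesis by (simp add: seg_sum_def o_def)
qed

lemma seg_sum_rev:
  fixes x :: "'a list"
  shows "seg_sum (rev x) F = seg_sum x (\<lambda>P. F (rev (map rev P)))"
proof -
  have revs_revs: "rev (map rev (rev (map rev P))) = P" for P :: "'a list list"
    by (simp add: rev_map o_def)
  have concat_revs: "concat (rev (map rev P)) = rev (concat P)" for P :: "'a list list"
    by (simp add: rev_concat rev_map)
  show ?thesis
    unfolding seg_sum_eq_sum
    by (rule sum.reindex_bij_witness[where i="\<lambda>P. rev (map rev P)" and j="\<lambda>P. rev (map rev P)"])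
      (auto simp: revs_revs concat_revs)
qed

definition glue :: "'a list list \<Rightarrow> 'a list list \<Rightarrow> 'a list list" where
  "glue P Q = butlast P @ (last P @ hd Q) # tl Q"

lemma seg_sum_append:
  assumes "xs \<noteq> []" "ys \<noteq> []"
  shows "seg_sum (xs @ ys) F = seg_sum xs (\<lambda>P. seg_sum ys (\<lambda>Q. F (P @ Q) + F (glue P Q)))"
  using assms(1)
proof (induction xs arbitrary: F rule: list_nonempty_induct)
  case (single x)
  show ?case
    by (simp add: seg_sum_Cons glue_def) (rule seg_sum_cong, use assms(2) in auto)
next
  case (cons x xs)
  define F' where "F' = (\<lambda>p. F ([x] # p) + (if p = [] then 0 else F ((x # hd p) # tl p)))"
  have "seg_sum ((x # xs) @ ys) F = seg_sum (xs @ ys) F'"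
    by (simp add: seg_sum_Cons F'_def)
  also have "\<dots> = seg_sum xs (\<lambda>P. seg_sum ys (\<lambda>Q. F' (P @ Q) + F' (glue P Q)))"
    by (rule cons.IH)
  also have "\<dots> = seg_sum (x # xs) (\<lambda>P. seg_sum ys (\<lambda>Q. F (P @ Q) + F (glue P Q)))"
    unfolding seg_sum_Cons
  proof (rule seg_sum_cong)
    fix P :: "'a list list" assume "concat P = xs" "[] \<notin> set P"
    then have "P \<noteq> []" using cons.hyps by auto
    have "F' (P @ Q) + F' (glue P Q) =
        (F (([x] # P) @ Q) + F (glue ([x] # P) Q)) + (F (((x # hd P) # tl P) @ Q) + F (glue ((x # hd P) # tl P) Q))"
      if "Q \<noteq> []" for Q
      using \<open>P \<noteq> []\<close> that by (cases P; cases "tl P") (simp_all add: F'_def glue_def)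
    moreover have "Q \<noteq> []" if "concat Q = ys" for Q
      using that assms(2) by auto
    ultimately show "seg_sum ys (\<lambda>Q. F' (P @ Q) + F' (glue P Q)) =
      seg_sum ys (\<lambda>Q. F (([x] # P) @ Q) + F (glue ([x] # P) Q)) +
      (if P = [] then 0 else seg_sum ys (\<lambda>Q. F (((x # hd P) # tl P) @ Q) + F (glue ((x # hd P) # tl P) Q)))"
      using \<open>P \<noteq> []\<close> by (simp add: seg_sum_add[symmetric] cong: seg_sum_cong)
  qed
  finally show ?case .
qed

lemma seg_sum_first_block:
  assumes "B \<noteq> []"
  shows "seg_sum B F = (\<Sum>k = 1..length B. seg_sum (drop k B) (\<lambda>p. F (take k B # p)))"
  using assms
proof (induction B arbitrary: F rule: list_nonempty_induct)
  case (single x)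
  then show ?case by simp
next
  case (cons y r)
  define F' where "F' = (\<lambda>p. if p = [] then 0 else F ((y # hd p) # tl p))"
  have "seg_sum (y # r) F = seg_sum r (\<lambda>p. F ([y] # p)) + seg_sum r F'"
    by (simp add: seg_sum_Cons seg_sum_add F'_def)
  also have "seg_sum r F' = (\<Sum>k = 1..length r. seg_sum (drop k r) (\<lambda>p. F ((y # take k r) # p)))"
    by (simp add: cons.IH F'_def)
  also have "\<dots> = (\<Sum>k = Suc 1..Suc (length r). seg_sum (drop k (y # r)) (\<lambda>p. F (take k (y # r) # p)))"
    by (simp only: sum.shift_bounds_cl_Suc_ivl) simp
  also have "seg_sum r (\<lambda>p. F ([y] # p)) + \<dots> =
      (\<Sum>k = 1..length (y # r). seg_sum (drop k (y # r)) (\<lambda>p. F (take k (y # r) # p)))"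
    by (subst (2) sum.atLeast_Suc_atMost) simp_all
  finally show ?case .
qed

fun seg_sum_blocks :: "'a list list \<Rightarrow> ('a list list list \<Rightarrow> 'b::comm_ring_1) \<Rightarrow> 'b" where
  "seg_sum_blocks [] G = G []"
| "seg_sum_blocks (B # R) G = seg_sum B (\<lambda>p. seg_sum_blocks R (\<lambda>q. G (p # q)))"

lemma seg_sum_blocks_add: "seg_sum_blocks R (\<lambda>q. F q + G q) = seg_sum_blocks R F + seg_sum_blocks R G"
  by (induction R arbitrary: F G) (simp_all add: seg_sum_add)

lemma seg_sum_blocks_mult_left: "seg_sum_blocks R (\<lambda>q. c * F q) = c * seg_sum_blocks R F"
  by (induction R arbitrary: F) (simp_all add: seg_sum_mult_left)

lemma seg_sum_blocks_zero [simp]: "seg_sum_blocks R (\<lambda>q. 0) = 0"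
  using seg_sum_blocks_mult_left[of R 0 "\<lambda>q. 0"] by simp

lemma seg_sum_blocks_prod:
  "seg_sum_blocks R (\<lambda>QQ. H (map concat QQ) * prod_list (map g QQ)) = H R * prod_list (map (\<lambda>B. seg_sum B g) R)"
proof (induction R arbitrary: H)
  case (Cons B R)
  have "seg_sum_blocks R (\<lambda>q. H (concat p # map concat q) * prod_list (map g q)) =
      H (concat p # R) * prod_list (map (\<lambda>B. seg_sum B g) R)" for p
    using Cons.IH[of "\<lambda>R. H (concat p # R)"] by simp
  then have "seg_sum_blocks (B # R) (\<lambda>QQ. H (map concat QQ) * prod_list (map g QQ))
      = seg_sum B (\<lambda>p. g p * (H (concat p # R) * prod_list (map (\<lambda>B. seg_sum B g) R)))"
    by (simp add: ac_simps seg_sum_blocks_mult_left)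
  also have "\<dots> = seg_sum B (\<lambda>p. g p * (H (B # R) * prod_list (map (\<lambda>B. seg_sum B g) R)))"
    by (rule seg_sum_cong) simp
  finally show ?case
    by (simp add: seg_sum_mult_right ac_simps)
qed simp

lemma seg_sum_blocks_cong:
  "(\<And>QQ. length QQ = length R \<Longrightarrow> F QQ = G QQ) \<Longrightarrow> seg_sum_blocks R F = seg_sum_blocks R G"
proof (induction R arbitrary: F G)
  case (Cons B R)
  show ?case
    by (simp, intro seg_sum_cong Cons.IH) (simp add: Cons.prems)
qed simp

lemma seg_sum_blocks_Cons_block:
  "seg_sum_blocks ((y # C) # R) G = seg_sum_blocks (C # R) (\<lambda>QQ. G (([y] # hd QQ) # tl QQ) +
    (if hd QQ = [] then 0 else G (((y # hd (hd QQ)) # tl (hd QQ)) # tl QQ)))"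
proof -
  have "seg_sum_blocks R (\<lambda>q. if p = [] then 0 else G (((y # hd p) # tl p) # q)) =
      (if p = [] then 0 else seg_sum_blocks R (\<lambda>q. G (((y # hd p) # tl p) # q)))" for p
    by simp
  then show ?thesis
    by (simp add: seg_sum_Cons seg_sum_add seg_sum_blocks_add cong: if_cong)
qed

text \<open>Grouping consecutive blocks of a segmentation of \<open>x\<close> is the same as choosing a coarser
  segmentation of \<open>x\<close> and segmenting each of its blocks.\<close>
lemma seg_sum_seg_sum: "seg_sum x (\<lambda>P. seg_sum P G) = seg_sum x (\<lambda>R. seg_sum_blocks R G)"
proof (induction x arbitrary: G)
  case (Cons y r)
  define G1 where "G1 = (\<lambda>q. G ([[y]] # q) + (if q = [] then 0 else G (([y] # hd q) # tl q)))"
  define G2 where "G2 = (\<lambda>QQ. if QQ = [] \<or> hd QQ = [] then 0 else G (((y # hd (hd QQ)) # tl (hd QQ)) # tl QQ))"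
  have "(if p = [] then 0 else seg_sum ((y # hd p) # tl p) G) = seg_sum p G2" for p
    by (cases p) (simp_all add: seg_sum_Cons G2_def cong: if_cong)
  then have "seg_sum (y # r) (\<lambda>P. seg_sum P G) = seg_sum r (\<lambda>p. seg_sum p (\<lambda>q. G1 q + G2 q))"
    by (simp add: seg_sum_Cons seg_sum_add G1_def)
  also have "\<dots> = seg_sum r (\<lambda>R. seg_sum_blocks R (\<lambda>q. G1 q + G2 q))"
    by (rule Cons.IH)
  also have "\<dots> = seg_sum (y # r) (\<lambda>R. seg_sum_blocks R G)"
    unfolding seg_sum_Cons
  proof (intro seg_sum_cong)
    fix R
    show "seg_sum_blocks R (\<lambda>q. G1 q + G2 q) =
        seg_sum_blocks ([y] # R) G + (if R = [] then 0 else seg_sum_blocks ((y # hd R) # tl R) G)"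
    proof (cases R)
      case (Cons C R')
      have "seg_sum_blocks R (\<lambda>q. G1 q + G2 q) = seg_sum_blocks R (\<lambda>q. G ([[y]] # q)) +
          seg_sum_blocks R (\<lambda>q. G (([y] # hd q) # tl q) +
            (if hd q = [] then 0 else G (((y # hd (hd q)) # tl (hd q)) # tl q)))"
        unfolding seg_sum_blocks_add[symmetric]
        by (rule seg_sum_blocks_cong) (use Cons in \<open>auto simp: G1_def G2_def\<close>)
      also have "seg_sum_blocks R (\<lambda>q. G ([[y]] # q)) = seg_sum_blocks ([y] # R) G"
        by simp
      also have "seg_sum_blocks R (\<lambda>q. G (([y] # hd q) # tl q) +
            (if hd q = [] then 0 else G (((y # hd (hd q)) # tl (hd q)) # tl q))) =
          seg_sum_blocks ((y # hd R) # tl R) G"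
        unfolding Cons list.sel by (rule seg_sum_blocks_Cons_block[symmetric])
      finally show ?thesis
        using Cons by simp
    qed (simp add: G1_def G2_def)
  qed
  finally show ?case .
qed simp

section \<open>An inversion formula for parity weights\<close>

definition oe_free :: "nat list \<Rightarrow> bool" where
  "oe_free B \<longleftrightarrow> successively (\<lambda>x y. \<not> (odd x \<and> even y)) B"

definition eo_free :: "nat list \<Rightarrow> bool" where
  "eo_free B \<longleftrightarrow> successively (\<lambda>x y. \<not> (even x \<and> odd y)) B"

lemma oe_free_append:
  "oe_free (xs @ ys) \<longleftrightarrow> oe_free xs \<and> oe_free ys \<and> (xs = [] \<or> ys = [] \<or> \<not> (odd (last xs) \<and> even (hd ys)))"
  by (simp add: oe_free_def successively_append_iff)

lemma eo_free_append:
  "eo_free (xs @ ys) \<longleftrightarrow> eo_free xs \<and> eo_free ys \<and> (xs = [] \<or> ys = [] \<or> \<not> (even (last xs) \<and> odd (hd ys)))"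
  by (simp add: eo_free_def successively_append_iff)

lemma oe_free_rev: "oe_free (rev B) \<longleftrightarrow> eo_free B"
  by (simp add: oe_free_def eo_free_def conj_commute)

lemma successively_if_all_pairs:
  assumes "\<forall>x\<in>set xs. \<forall>y\<in>set xs. R x y"
  shows "successively R xs"
  using assms
proof (induction xs)
  case (Cons x xs)
  then show ?case
    by (cases xs) (simp_all add: successively_Cons)
qed simp

lemma successively_imp_hd:
  assumes "successively (\<lambda>x y. Q x \<longrightarrow> Q y) xs" "xs \<noteq> []" "Q (hd xs)"
  shows "\<forall>x\<in>set xs. Q x"
  using assms
proof (induction xs)
  case (Cons x xs)
  show ?case
  proof (cases "xs = []")
    case False
    with Cons.prems(1) have step: "Q x \<longrightarrow> Q (hd xs)" and tail: "successively (\<lambda>x y. Q x \<longrightarrow> Q y) xs"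
      by (simp_all add: successively_Cons)
    from step Cons.prems(3) have "Q (hd xs)"
      by simp
    then have "\<forall>z\<in>set xs. Q z"
      by (rule Cons.IH[OF tail False])
    with Cons.prems(3) show ?thesis
      by simp
  qed (use Cons.prems in simp)
qed simp

lemma successively_imp_last:
  assumes "successively (\<lambda>x y. Q y \<longrightarrow> Q x) xs" "xs \<noteq> []" "Q (last xs)"
  shows "\<forall>x\<in>set xs. Q x"
proof -
  have "successively (\<lambda>x y. Q x \<longrightarrow> Q y) (rev xs)"
    using assms(1) by simp
  moreover have "rev xs \<noteq> []" "Q (hd (rev xs))"
    using assms(2,3) by (simp_all add: hd_rev)
  ultimately show ?thesis
    using successively_imp_hd by fastforce
qed

lemma oe_free_hd_odd: "oe_free B \<Longrightarrow> B \<noteq> [] \<Longrightarrow> odd (hd B) \<Longrightarrow> \<forall>x\<in>set B. odd x"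
  by (rule successively_imp_hd) (auto simp: oe_free_def elim: successively_mono)

lemma oe_free_last_even: "oe_free B \<Longrightarrow> B \<noteq> [] \<Longrightarrow> even (last B) \<Longrightarrow> \<forall>x\<in>set B. even x"
  by (rule successively_imp_last) (auto simp: oe_free_def elim: successively_mono)

lemma eo_free_hd_even: "eo_free B \<Longrightarrow> B \<noteq> [] \<Longrightarrow> even (hd B) \<Longrightarrow> \<forall>x\<in>set B. even x"
  by (rule successively_imp_hd) (auto simp: eo_free_def elim: successively_mono)

lemma eo_free_last_odd: "eo_free B \<Longrightarrow> B \<noteq> [] \<Longrightarrow> odd (last B) \<Longrightarrow> \<forall>x\<in>set B. odd x"
  by (rule successively_imp_last) (auto simp: eo_free_def elim: successively_mono)

definition parity_weight :: "nat list \<Rightarrow> rat" where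
  "parity_weight B = 1 / (of_nat (fact (length (filter odd B))) * of_nat (fact (length (filter even B))))"

lemma parity_weight_append_odd_even:
  "\<forall>x\<in>set C. odd x \<Longrightarrow> \<forall>x\<in>set D. even x \<Longrightarrow> parity_weight (C @ D) = parity_weight C * parity_weight D"
  by (simp add: parity_weight_def filter_id_conv filter_empty_conv)

lemma parity_weight_append_even_odd:
  "\<forall>x\<in>set C. even x \<Longrightarrow> \<forall>x\<in>set D. odd x \<Longrightarrow> parity_weight (C @ D) = parity_weight C * parity_weight D"
  by (simp add: parity_weight_def filter_id_conv filter_empty_conv mult.commute)

lemma parity_weight_same_parity:
  assumes "oe_free B" "eo_free B"
  shows "parity_weight B = 1 / fact (length B)"
proof (cases "B = []")
  case False
  then consider "\<forall>x\<in>set B. odd x" | "\<forall>x\<in>set B. even x"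
    using oe_free_hd_odd[OF assms(1)] eo_free_hd_even[OF assms(2)] by blast
  then show ?thesis
    by cases (simp_all add: parity_weight_def filter_id_conv filter_empty_conv)
qed (simp add: parity_weight_def)

lemma same_parity_free:
  assumes "(\<forall>x\<in>set B. odd x) \<or> (\<forall>x\<in>set B. even x)"
  shows "oe_free B" "eo_free B"
  using assms by (auto simp: oe_free_def eo_free_def intro: successively_if_all_pairs)

definition eo_factor :: "nat list \<Rightarrow> rat" where
  "eo_factor C = (if eo_free C then - parity_weight C else 0)"

definition oe_factor :: "nat list \<Rightarrow> rat" where
  "oe_factor B = (if oe_free B then (-1) ^ length B * parity_weight B else 0)"

lemma sum_alternating_inverse_fact:
  assumes "0 < n"
  shows "(\<Sum>k = 1..n. - (1 / fact k) * ((-1) ^ (n - k) * (1 / fact (n - k)))) = ((-1) ^ n * (1 / fact n) :: 'a::field_char_0)"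
proof -
  have "fact n * (\<Sum>k\<le>n. (-1) ^ (n - k) * (1 / (fact k * fact (n - k)))) = (\<Sum>k\<le>n. of_nat (n choose k) * (-1::'a) ^ (n - k))"
    unfolding sum_distrib_left by (rule sum.cong) (auto simp: binomial_fact)
  also have "\<dots> = 0"
    using binomial_ring[of "1::'a" "-1" n] assms by (simp add: power_0_left)
  finally have "(\<Sum>k\<le>n. (-1) ^ (n - k) * (1 / (fact k * fact (n - k)))) = (0::'a)"
    by simp
  moreover have "{..n} = insert 0 {1..n}"
    by auto
  ultimately show ?thesis
    by (simp add: sum_negf[symmetric] field_simps add_eq_0_iff2)
qed

lemma not_successively_split:
  assumes "\<not> successively R zs"
  obtains xs ys where "zs = xs @ ys" "xs \<noteq> []" "ys \<noteq> []" "\<not> R (last xs) (hd ys)"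
  using assms
proof (induction zs arbitrary: thesis)
  case (Cons z zs)
  show ?case
  proof (cases "R z (hd zs)")
    case True
    with Cons.prems(2) have "\<not> successively R zs" "zs \<noteq> []"
      by (auto simp: successively_Cons)
    then show ?thesis
      by (metis Cons.IH Cons.prems(1) append_Cons last_ConsR list.distinct(1))
  next
    case False
    with Cons.prems(2) have "zs \<noteq> []"
      by auto
    with False show ?thesis
      using Cons.prems(1)[of "[z]" zs] by simp
  qed
qed simp

text \<open>A junction of \<open>xs @ ys\<close> at which every gluing of a block ending \<open>xs\<close> with a block starting
  \<open>ys\<close> multiplies the weight by \<open>k\<close> contributes the factor \<open>1 + k\<close>.\<close>
lemma seg_sum_append_prod:
  fixes f :: "'a list \<Rightarrow> 'b::comm_ring_1"
  assumes "xs \<noteq> []" "ys \<noteq> []"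
    and glue: "\<And>C D. C \<noteq> [] \<Longrightarrow> D \<noteq> [] \<Longrightarrow> set C \<subseteq> set xs \<Longrightarrow> set D \<subseteq> set ys \<Longrightarrow>
      last C = last xs \<Longrightarrow> hd D = hd ys \<Longrightarrow> f (C @ D) = k * (f C * f D)"
  shows "seg_sum (xs @ ys) (\<lambda>P. prod_list (map f P)) =
    (1 + k) * seg_sum xs (\<lambda>P. prod_list (map f P)) * seg_sum ys (\<lambda>P. prod_list (map f P))"
proof -
  have junction: "prod_list (map f (P @ Q)) + prod_list (map f (glue P Q)) =
      (1 + k) * prod_list (map f P) * prod_list (map f Q)"
    if P: "concat P = xs" "[] \<notin> set P" and Q: "concat Q = ys" "[] \<notin> set Q" for P Q
  proof -
    obtain P' C where P_eq: "P = P' @ [C]"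
      using P assms(1) by (cases P rule: rev_cases) auto
    obtain D Q' where Q_eq: "Q = D # Q'"
      using Q assms(2) by (cases Q) auto
    have "C \<noteq> []" "D \<noteq> []"
      using P(2) Q(2) P_eq Q_eq by auto
    then have "f (C @ D) = k * (f C * f D)"
      using P Q P_eq Q_eq by (intro glue) auto
    then show ?thesis
      by (simp add: P_eq Q_eq glue_def algebra_simps)
  qed
  have "seg_sum (xs @ ys) (\<lambda>P. prod_list (map f P)) =
      seg_sum xs (\<lambda>P. seg_sum ys (\<lambda>Q. (1 + k) * prod_list (map f P) * prod_list (map f Q)))"
    unfolding seg_sum_append[OF assms(1,2)]
    by (intro seg_sum_cong) (rule junction)
  then show ?thesis
    by (simp add: seg_sum_mult_left seg_sum_mult_right)
qed

lemma oe_factor_append_even_odd: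
  assumes "xs \<noteq> []" "ys \<noteq> []" "even (last xs)" "odd (hd ys)"
  shows "oe_factor (xs @ ys) = oe_factor xs * oe_factor ys"
proof (cases "oe_free xs \<and> oe_free ys")
  case True
  then have "\<forall>x\<in>set xs. even x" "\<forall>x\<in>set ys. odd x"
    using assms oe_free_last_even oe_free_hd_odd by blast+
  then show ?thesis
    using True assms by (simp add: oe_factor_def oe_free_append parity_weight_append_even_odd power_add)
qed (auto simp: oe_factor_def oe_free_append)

lemma eo_factor_append_odd_even:
  assumes "\<forall>x\<in>set C. odd x" "\<forall>x\<in>set D. even x"
  shows "eo_factor (C @ D) = - (eo_factor C * eo_factor D)"
proof -
  have "eo_free C" "eo_free D" "eo_free (C @ D)"
    using assms same_parity_free by (auto simp: eo_free_append)
  then show ?thesis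
    using assms by (simp add: eo_factor_def parity_weight_append_odd_even)
qed

lemma seg_sum_eo_factor_even_odd_junction:
  assumes "xs \<noteq> []" "ys \<noteq> []" "even (last xs)" "odd (hd ys)"
  shows "seg_sum (xs @ ys) (\<lambda>P. prod_list (map eo_factor P)) =
    seg_sum xs (\<lambda>P. prod_list (map eo_factor P)) * seg_sum ys (\<lambda>P. prod_list (map eo_factor P))"
proof -
  have "eo_factor (C @ D) = 0 * (eo_factor C * eo_factor D)"
    if "C \<noteq> []" "D \<noteq> []" "last C = last xs" "hd D = hd ys" for C D
    using that assms by (simp add: eo_factor_def eo_free_append)
  then show ?thesis
    using seg_sum_append_prod[of xs ys eo_factor 0] assms by simp
qed

lemma seg_sum_eo_factor_odd_even_junction:
  assumes "xs \<noteq> []" "ys \<noteq> []" "odd (last xs)" "even (hd ys)" "eo_free (xs @ ys)"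
  shows "seg_sum (xs @ ys) (\<lambda>P. prod_list (map eo_factor P)) = 0"
proof -
  have "eo_free xs" "eo_free ys"
    using assms(5) by (simp_all add: eo_free_append)
  then have "\<forall>x\<in>set xs. odd x" "\<forall>x\<in>set ys. even x"
    using assms eo_free_last_odd eo_free_hd_even by blast+
  then have "eo_factor (C @ D) = -1 * (eo_factor C * eo_factor D)"
    if "set C \<subseteq> set xs" "set D \<subseteq> set ys" for C D
    using that by (simp add: eo_factor_append_odd_even subset_iff)
  then show ?thesis
    using seg_sum_append_prod[of xs ys eo_factor "-1"] assms by simp
qed

text \<open>On a list of constant parity the inversion formula is the vanishing of the alternating
  sum of binomial coefficients.\<close>
lemma seg_sum_eo_factor_same_parity:
  assumes "oe_free B" "eo_free B"
  shows "seg_sum B (\<lambda>P. prod_list (map eo_factor P)) = oe_factor B"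
  using assms
proof (induction "length B" arbitrary: B rule: less_induct)
  case less
  define n where "n = length B"
  show ?case
  proof (cases "B = []")
    case False
    have "seg_sum B (\<lambda>P. prod_list (map eo_factor P)) =
        (\<Sum>k = 1..n. eo_factor (take k B) * seg_sum (drop k B) (\<lambda>P. prod_list (map eo_factor P)))"
      unfolding n_def seg_sum_first_block[OF False] by (simp add: seg_sum_mult_left)
    also have "\<dots> = (\<Sum>k = 1..n. - (1 / fact k) * ((-1) ^ (n - k) * (1 / fact (n - k))))"
    proof (rule sum.cong)
      fix k assume k: "k \<in> {1..n}"
      have "oe_free (take k B)" "eo_free (take k B)" "oe_free (drop k B)" "eo_free (drop k B)"
        using less.prems oe_free_append[of "take k B" "drop k B"] eo_free_append[of "take k B" "drop k B"]
        by simp_all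
      with less k False show "eo_factor (take k B) * seg_sum (drop k B) (\<lambda>P. prod_list (map eo_factor P)) =
          - (1 / fact k) * ((-1) ^ (n - k) * (1 / fact (n - k)))"
        by (simp add: eo_factor_def oe_factor_def parity_weight_same_parity n_def)
    qed simp
    also have "\<dots> = (-1) ^ n * (1 / fact n)"
      by (rule sum_alternating_inverse_fact) (use False in \<open>simp add: n_def\<close>)
    also have "\<dots> = oe_factor B"
      using less.prems by (simp add: n_def oe_factor_def parity_weight_same_parity)
    finally show ?thesis .
  qed (simp add: oe_factor_def oe_free_def parity_weight_def)
qed

text \<open>A list that is not \<open>eo_free\<close> is split at an even-odd junction, across which both
  sides are multiplicative; an \<open>eo_free\<close> list that is not \<open>oe_free\<close> is split at an odd-even
  junction, across which the gluings cancel.\<close>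
theorem seg_sum_eo_factor: "seg_sum B (\<lambda>P. prod_list (map eo_factor P)) = oe_factor B"
proof (induction "length B" arbitrary: B rule: less_induct)
  case less
  consider (even_odd) xs ys where "B = xs @ ys" "xs \<noteq> []" "ys \<noteq> []" "even (last xs)" "odd (hd ys)"
    | (odd_even) xs ys where "B = xs @ ys" "xs \<noteq> []" "ys \<noteq> []" "odd (last xs)" "even (hd ys)" "eo_free B"
    | (same_parity) "oe_free B" "eo_free B"
  proof (cases "eo_free B")
    case False
    then obtain xs ys where "B = xs @ ys" "xs \<noteq> []" "ys \<noteq> []" "\<not> \<not> (even (last xs) \<and> odd (hd ys))"
      unfolding eo_free_def by (rule not_successively_split)
    then show ?thesis
      using that(1) by blast
  next
    case True
    show ?thesis
    proof (cases "oe_free B")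
      case False
      then obtain xs ys where "B = xs @ ys" "xs \<noteq> []" "ys \<noteq> []" "\<not> \<not> (odd (last xs) \<and> even (hd ys))"
        unfolding oe_free_def by (rule not_successively_split)
      then show ?thesis
        using that(2) True by blast
    qed (use that(3) True in blast)
  qed
  then show ?case
  proof cases
    case even_odd
    then show ?thesis
      using less by (simp add: seg_sum_eo_factor_even_odd_junction oe_factor_append_even_odd)
  next
    case odd_even
    then show ?thesis
      by (simp add: seg_sum_eo_factor_odd_even_junction oe_factor_def oe_free_append)
  next
    case same_parity
    then show ?thesis
      by (rule seg_sum_eo_factor_same_parity)
  qed
qed

section \<open>The antipode of the monomial basis\<close>

lemma is_comp_take: "is_comp a \<Longrightarrow> is_comp (take i a)"
  unfolding is_comp_def by (meson in_set_takeD)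

lemma is_comp_drop: "is_comp a \<Longrightarrow> is_comp (drop i a)"
  unfolding is_comp_def by (meson in_set_dropD)

lemma is_comp_rev [simp]: "is_comp (rev a) \<longleftrightarrow> is_comp a"
  unfolding is_comp_def by simp

lemma sum_list_pos: "is_comp a \<Longrightarrow> a \<noteq> [] \<Longrightarrow> 0 < sum_list a"
  by (cases a) (auto simp: is_comp_def)

lemma finite_comps_bounded: "finite {a. is_comp a \<and> sum_list a \<le> n}"
proof -
  have "length a \<le> sum_list a" if "is_comp a" for a
    using that by (induction a) (auto simp: is_comp_def)
  then have "{a. is_comp a \<and> sum_list a \<le> n} \<subseteq> {xs. set xs \<subseteq> {..n} \<and> length xs \<le> n}"
    using member_le_sum_list by fastforce
  then show ?thesis
    using finite_lists_length_le[of "{..n}" n] finite_subset by blast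
qed

lemma finite_comps: "finite (comps n)"
  unfolding comps_def by (rule finite_subset[OF _ finite_comps_bounded[of n]]) auto

abbreviation block_sums :: "nat list list \<Rightarrow> nat list" where
  "block_sums P \<equiv> map sum_list P"

lemma sum_list_block_sums: "sum_list (block_sums P) = sum_list (concat P)"
  by (induction P) auto

lemma is_comp_block_sums:
  assumes "is_comp (concat P)" "[] \<notin> set P"
  shows "is_comp (block_sums P)"
  using assms by (auto simp: is_comp_def intro!: sum_list_pos)

definition qsh_coeff :: "nat list \<Rightarrow> nat list \<Rightarrow> nat list \<Rightarrow> rat" where
  "qsh_coeff b d c = of_nat (count_list (qsh b d) c)"

lemma qsh_Nil_right [simp]: "qsh b [] = [b]"
  by (cases b) auto

lemma sum_list_qsh: "x \<in> set (qsh a b) \<Longrightarrow> sum_list x = sum_list a + sum_list b"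
  by (induction a b arbitrary: x rule: qsh.induct) auto

lemma qsh_coeff_Nil_right: "qsh_coeff b [] c = (if c = b then 1 else 0)"
  by (simp add: qsh_coeff_def)

lemma qsh_coeff_Nil: "qsh_coeff b d [] = (if b = [] \<and> d = [] then 1 else 0)"
proof -
  have "count_list (map ((#) x) L) [] = 0" for x :: nat and L
    by (induction L) auto
  then show ?thesis
    by (cases b; cases d) (simp_all add: qsh_coeff_def)
qed

lemma qsh_coeff_Cons: "qsh_coeff b d (c1 # c') =
   (if b \<noteq> [] \<and> c1 = hd b then qsh_coeff (tl b) d c' else 0) +
   (if d \<noteq> [] \<and> c1 = hd d then qsh_coeff b (tl d) c' else 0) +
   (if b \<noteq> [] \<and> d \<noteq> [] \<and> c1 = hd b + hd d then qsh_coeff (tl b) (tl d) c' else 0)"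
proof -
  have "count_list (map ((#) x) L) (c1 # c') = (if x = c1 then count_list L c' else 0)" for x and L
    by (induction L) auto
  then show ?thesis
    by (cases b; cases d) (auto simp: qsh_coeff_def)
qed

lemma qmult_Mb_right:
  assumes "is_comp d"
  shows "qmult f (Mb d) c =
    (\<Sum>a \<in> {a. is_comp a \<and> sum_list a + sum_list d = sum_list c}. f a * qsh_coeff a d c)"
proof -
  define S where "S = {(a, b). is_comp a \<and> is_comp b \<and> sum_list a + sum_list b = sum_list c}"
  have "S \<subseteq> {a. is_comp a \<and> sum_list a \<le> sum_list c} \<times> {a. is_comp a \<and> sum_list a \<le> sum_list c}"
    unfolding S_def by auto
  then have "finite S"
    using finite_comps_bounded finite_subset by blast
  have "qmult f (Mb d) c = (\<Sum>x\<in>S. if snd x = d then f (fst x) * qsh_coeff (fst x) d c else 0)"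
    unfolding qmult_def S_def qsh_coeff_def by (rule sum.cong) (auto simp: Mb_def)
  also have "\<dots> = (\<Sum>x\<in>{x\<in>S. snd x = d}. f (fst x) * qsh_coeff (fst x) d c)"
    by (rule sum.inter_filter[OF \<open>finite S\<close>, symmetric])
  also have "{x\<in>S. snd x = d} = (\<lambda>a. (a, d)) ` {a. is_comp a \<and> sum_list a + sum_list d = sum_list c}"
    unfolding S_def using assms by auto
  finally show ?thesis
    by (simp add: sum.reindex inj_on_def)
qed

text \<open>\<open>coarse_qsh r d c\<close> is the coefficient of \<open>M\<^sub>c\<close> in \<open>(\<Sum>\<^sub>e M\<^sub>e) M\<^sub>d\<close>, where \<open>e\<close> runs over
  the coarsenings of \<open>r\<close>.\<close>
definition coarse_qsh :: "nat list \<Rightarrow> nat list \<Rightarrow> nat list \<Rightarrow> rat" where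
  "coarse_qsh r d c = seg_sum r (\<lambda>P. qsh_coeff (block_sums P) d c)"

text \<open>The part of \<open>coarse_qsh r d (c1 # c')\<close> in which \<open>c1\<close> is the first block sum alone.\<close>
definition qsh_lead :: "nat list \<Rightarrow> nat list \<Rightarrow> nat \<Rightarrow> nat list \<Rightarrow> rat" where
  "qsh_lead r d c1 c' =
    seg_sum r (\<lambda>P. if P \<noteq> [] \<and> c1 = sum_list (hd P) then qsh_coeff (block_sums (tl P)) d c' else 0)"

lemma coarse_qsh_Nil_right: "coarse_qsh r [] c = seg_sum r (\<lambda>P. if c = block_sums P then 1 else 0)"
  by (simp add: coarse_qsh_def qsh_coeff_Nil_right)

lemma coarse_qsh_Nil_right_eq_0:
  assumes "sum_list c \<noteq> sum_list r"
  shows "coarse_qsh r [] c = 0"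
  unfolding coarse_qsh_Nil_right
  by (rule seg_sum_zero) (use assms sum_list_block_sums in auto)

lemma coarse_qsh_Nil: "coarse_qsh r d [] = (if r = [] \<and> d = [] then 1 else 0)"
proof (cases "r = []")
  case False
  then show ?thesis
    unfolding coarse_qsh_def by (simp, intro seg_sum_zero) (auto simp: qsh_coeff_Nil)
qed (simp add: coarse_qsh_def qsh_coeff_Nil)

lemma qsh_lead_Nil: "qsh_lead [] d c1 c' = 0"
  by (simp add: qsh_lead_def)

lemma coarse_qsh_Cons:
  "coarse_qsh r d (c1 # c') = qsh_lead r d c1 c' + (if d = [] then 0 else qsh_lead (hd d # r) (tl d) c1 c')"
proof (cases d)
  case Nil
  then show ?thesis
    unfolding coarse_qsh_def qsh_lead_def
    by (auto intro!: seg_sum_cong simp: qsh_coeff_Cons hd_map map_tl)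
next
  case (Cons y d')
  have "qsh_lead (y # r) d' c1 c' = seg_sum r (\<lambda>P. (if c1 = y then qsh_coeff (block_sums P) d' c' else 0) +
      (if P \<noteq> [] \<and> c1 = y + sum_list (hd P) then qsh_coeff (block_sums (tl P)) d' c' else 0))"
    unfolding qsh_lead_def seg_sum_Cons by (intro seg_sum_cong) auto
  moreover have "coarse_qsh r (y # d') (c1 # c') = seg_sum r (\<lambda>P.
      (if P \<noteq> [] \<and> c1 = sum_list (hd P) then qsh_coeff (block_sums (tl P)) (y # d') c' else 0) +
      ((if c1 = y then qsh_coeff (block_sums P) d' c' else 0) +
      (if P \<noteq> [] \<and> c1 = y + sum_list (hd P) then qsh_coeff (block_sums (tl P)) d' c' else 0)))"
    unfolding coarse_qsh_def by (intro seg_sum_cong) (auto simp: qsh_coeff_Cons hd_map map_tl)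
  ultimately show ?thesis
    unfolding Cons by (simp add: qsh_lead_def seg_sum_add)
qed

lemma qmult_coarse_qsh:
  assumes "is_comp d" "is_comp r"
  shows "qmult (\<lambda>x. s * coarse_qsh r [] x) (Mb d) c = s * coarse_qsh r d c"
proof -
  define A where "A = {a. is_comp a \<and> sum_list a + sum_list d = sum_list c}"
  have "finite A"
    unfolding A_def by (rule finite_subset[OF _ finite_comps_bounded[of "sum_list c"]]) auto
  have block_sums_in_A: "qsh_coeff (block_sums P) d c = 0" if "block_sums P \<notin> A"
    "concat P = r" "[] \<notin> set P" for P
    using that assms is_comp_block_sums[of P] sum_list_qsh[of c "block_sums P" d]
    by (auto simp: A_def qsh_coeff_def count_list_0_iff)
  have "coarse_qsh r [] a * qsh_coeff a d c =
      seg_sum r (\<lambda>P. if a = block_sums P then qsh_coeff a d c else 0)" for a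
    unfolding coarse_qsh_Nil_right seg_sum_mult_right[symmetric] by (rule seg_sum_cong) simp
  then have "qmult (\<lambda>x. s * coarse_qsh r [] x) (Mb d) c =
      (\<Sum>a\<in>A. s * seg_sum r (\<lambda>P. if a = block_sums P then qsh_coeff a d c else 0))"
    unfolding qmult_Mb_right[OF assms(1)] A_def by (simp add: mult.assoc)
  also have "\<dots> = s * seg_sum r (\<lambda>P. \<Sum>a\<in>A. if a = block_sums P then qsh_coeff a d c else 0)"
    by (simp add: sum_distrib_left[symmetric] sum_seg_sum_swap)
  also have "\<dots> = s * coarse_qsh r d c"
    unfolding coarse_qsh_def
  proof (intro arg_cong[where f="(*) s"] seg_sum_cong)
    fix P assume "concat P = r" "[] \<notin> set P"
    then show "(\<Sum>a\<in>A. if a = block_sums P then qsh_coeff a d c else 0) = qsh_coeff (block_sums P) d c"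
      using \<open>finite A\<close> block_sums_in_A by (cases "block_sums P \<in> A") auto
  qed
  finally show ?thesis .
qed

lemma coarse_qsh_alternating_sum:
  assumes "a \<noteq> []"
  shows "(\<Sum>i<length a. (-1) ^ i * coarse_qsh (rev (take i a)) (drop i a) c) =
    - ((-1) ^ length a * coarse_qsh (rev a) [] c)"
proof (cases c)
  case Nil
  then show ?thesis
    using assms by (simp add: coarse_qsh_Nil)
next
  case (Cons c1 c')
  define n where "n = length a"
  define T where "T i = coarse_qsh (rev (take i a)) (drop i a) c" for i
  define u where "u i = qsh_lead (rev (take i a)) (drop i a) c1 c'" for i
  have u_0: "u 0 = 0" and u_n: "u n = T n"
    unfolding u_def T_def Cons n_def by (simp_all add: qsh_lead_Nil coarse_qsh_Cons)
  have "T i = u i + u (Suc i)" if "i < n" for i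
    using that unfolding T_def u_def Cons n_def
    by (simp add: coarse_qsh_Cons hd_drop_conv_nth drop_Suc tl_drop take_Suc_conv_app_nth)
  then have "(\<Sum>i<n. (-1) ^ i * T i) = (\<Sum>i<n. (-1) ^ i * u i + (-1) ^ i * u (Suc i))"
    by (simp add: algebra_simps)
  also have "\<dots> = u 0 - (-1) ^ n * u n"
    by (induction n) (simp_all add: algebra_simps)
  also have "\<dots> = - ((-1) ^ n * T n)"
    by (simp add: u_0 u_n)
  finally show ?thesis
    unfolding T_def n_def by simp
qed

declare antM.simps [simp del] \<comment> \<open>as a rewrite rule the recursion of \<open>antM\<close> does not terminate\<close>

lemma antM_eq_coarse_qsh: "is_comp a \<Longrightarrow> antM a = (\<lambda>c. (-1) ^ length a * coarse_qsh (rev a) [] c)"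
proof (induction "length a" arbitrary: a rule: less_induct)
  case less
  show ?case
  proof (cases "a = []")
    case True
    then show ?thesis
      by (auto simp: antM.simps fun_eq_iff Mb_def coarse_qsh_Nil_right)
  next
    case False
    have IH: "antM (take i a) = (\<lambda>c. (-1) ^ i * coarse_qsh (rev (take i a)) [] c)" if "i < length a" for i
      using less.hyps[of "take i a"] that is_comp_take[OF less.prems] by simp
    show ?thesis
    proof
      fix c
      have "antM a c = - (\<Sum>i<length a. qmult (antM (take i a)) (Mb (drop i a)) c)"
        using False by (subst antM.simps) simp
      also have "\<dots> = - (\<Sum>i<length a. (-1) ^ i * coarse_qsh (rev (take i a)) (drop i a) c)"
        by (simp add: IH qmult_coarse_qsh is_comp_drop is_comp_take less.prems)
      also have "\<dots> = (-1) ^ length a * coarse_qsh (rev a) [] c"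
        by (simp add: coarse_qsh_alternating_sum False)
      finally show "antM a c = (-1) ^ length a * coarse_qsh (rev a) [] c" .
    qed
  qed
qed

section \<open>Coarsenings and the shuffle basis\<close>

lemma sum_take_add:
  "i \<le> j \<Longrightarrow> sum_list (take j a) = sum_list (take i a) + sum_list (take (j - i) (drop i (a :: nat list)))"
  by (metis le_add_diff_inverse sum_list_append take_add)

lemma sum_take_strict_mono:
  assumes "is_comp a" "i < j" "j \<le> length a"
  shows "sum_list (take i a) < sum_list (take j a)"
proof -
  have "0 < sum_list (take (j - i) (drop i a))"
    using assms by (intro sum_list_pos is_comp_take is_comp_drop) auto
  then show ?thesis
    using sum_take_add[of i j a] assms(2) by simp
qed

lemma sum_take_le_iff:
  assumes "is_comp a" "i \<le> length a" "j \<le> length a"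
  shows "sum_list (take i a) \<le> sum_list (take j a) \<longleftrightarrow> i \<le> j"
  using sum_take_strict_mono[OF assms(1)] assms by (metis le_less not_le)

lemma inj_on_sum_take: "is_comp a \<Longrightarrow> inj_on (\<lambda>k. sum_list (take k a)) {..length a}"
  unfolding inj_on_def using sum_take_le_iff by (metis atMost_iff order_antisym order_refl)

definition cuts :: "'a list list \<Rightarrow> nat set" where
  "cuts P = {length (concat (take i P)) | i. 0 < i \<and> i < length P}"

lemma psums_block_sums: "psums (block_sums P) = (\<lambda>k. sum_list (take k (concat P))) ` cuts P"
proof -
  have "take (length (concat (take i P))) (concat P) = concat (take i P)" for i
    by (metis append_eq_conv_conj append_take_drop_id concat_append)
  then have "sum_list (take i (block_sums P)) = sum_list (take (length (concat (take i P))) (concat P))" for i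
    by (simp add: take_map sum_list_block_sums)
  then show ?thesis
    unfolding psums_def cuts_def by auto
qed

lemma concat_eq_Nil_iff: "[] \<notin> set P \<Longrightarrow> concat P = [] \<longleftrightarrow> P = []"
  by (induction P) auto

lemma cuts_subset:
  assumes "[] \<notin> set P"
  shows "cuts P \<subseteq> {0<..<length (concat P)}"
proof
  fix k assume "k \<in> cuts P"
  then obtain i where i: "0 < i" "i < length P" "k = length (concat (take i P))"
    unfolding cuts_def by auto
  have "[] \<notin> set (take i P)" "[] \<notin> set (drop i P)"
    using assms by (meson in_set_takeD in_set_dropD)+
  moreover have "take i P \<noteq> []" "drop i P \<noteq> []"
    using i by (cases P; simp)+
  ultimately have "concat (take i P) \<noteq> []" "concat (drop i P) \<noteq> []"
    using concat_eq_Nil_iff by blast+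
  moreover have "length (concat P) = length (concat (take i P)) + length (concat (drop i P))"
    by (metis append_take_drop_id concat_append length_append)
  ultimately show "k \<in> {0<..<length (concat P)}"
    using i(3) by simp
qed

lemma qleq_block_sums:
  assumes "is_comp (concat P)" "[] \<notin> set P"
  shows "qleq (block_sums P) (concat P)"
proof -
  have "psums (block_sums P) \<subseteq> (\<lambda>k. sum_list (take k (concat P))) ` {0<..<length (concat P)}"
    unfolding psums_block_sums using cuts_subset[OF assms(2)] by auto
  also have "\<dots> = psums (concat P)"
    unfolding psums_def by auto
  finally show ?thesis
    unfolding qleq_def using assms is_comp_block_sums sum_list_block_sums by simp
qed

lemma qleq_Cons_drop:
  assumes "qleq (d1 # d') a" "d' \<noteq> []"
  obtains k where "0 < k" "k < length a" "d1 = sum_list (take k a)" "qleq d' (drop k a)"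
proof -
  have a: "is_comp a" "is_comp (d1 # d')" "sum_list (d1 # d') = sum_list a" "psums (d1 # d') \<subseteq> psums a"
    using assms unfolding qleq_def by auto
  have "d1 \<in> psums (d1 # d')"
    unfolding psums_def using assms(2) by (auto intro!: exI[of _ 1])
  then obtain k where k: "0 < k" "k < length a" "d1 = sum_list (take k a)"
    using a(4) unfolding psums_def by auto
  have "x \<in> psums (drop k a)" if "x \<in> psums d'" for x
  proof -
    obtain i where i: "0 < i" "i < length d'" "x = sum_list (take i d')"
      using \<open>x \<in> psums d'\<close> unfolding psums_def by auto
    have "d1 + x \<in> psums (d1 # d')"
      unfolding psums_def using i by (auto intro!: exI[of _ "Suc i"])
    then obtain j where j: "0 < j" "j < length a" "d1 + x = sum_list (take j a)"
      using a(4) unfolding psums_def by auto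
    have "0 < x"
      using i a(2) by (auto intro!: sum_list_pos is_comp_take simp: is_comp_def)
    then have "k < j"
      using j k sum_take_le_iff[OF a(1), of j k] by linarith
    then have "x = sum_list (take (j - k) (drop k a))"
      using sum_take_add[of k j a] j k by simp
    then show ?thesis
      unfolding psums_def using \<open>k < j\<close> j by auto
  qed
  moreover have "sum_list d' = sum_list (drop k a)"
    using a(3) k(3) by (metis add_left_cancel append_take_drop_id sum_list.Cons sum_list_append)
  moreover have "is_comp (drop k a)" "is_comp d'"
    using is_comp_drop[OF a(1)] a(2) by (simp_all add: is_comp_def)
  ultimately have "qleq d' (drop k a)"
    unfolding qleq_def by blast
  with k show ?thesis
    using that by blast
qed

lemma qleq_obtain_segmentation:
  assumes "qleq d a"
  obtains P where "concat P = a" "[] \<notin> set P" "d = block_sums P"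
  using assms
proof (induction d arbitrary: a thesis)
  case Nil
  then have "is_comp a" "sum_list a = 0"
    unfolding qleq_def by simp_all
  then have "a = []"
    by (metis less_irrefl sum_list_pos)
  then show ?case
    by (intro Nil.prems(1)[of "[]"]) simp_all
next
  case (Cons d1 d')
  show ?case
  proof (cases "d' = []")
    case True
    then have "sum_list a = d1" "0 < d1"
      using Cons.prems(2) unfolding qleq_def is_comp_def by simp_all
    then have "a \<noteq> []"
      by (metis less_irrefl sum_list.Nil)
    then show ?thesis
      by (intro Cons.prems(1)[of "[a]"]) (simp_all add: True \<open>sum_list a = d1\<close>)
  next
    case False
    obtain k where k: "0 < k" "k < length a" "d1 = sum_list (take k a)" "qleq d' (drop k a)"
      using Cons.prems(2) False by (rule qleq_Cons_drop)
    then obtain P' where "concat P' = drop k a" "[] \<notin> set P'" "d' = block_sums P'"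
      using Cons.IH by blast
    moreover have "take k a \<noteq> []"
      using k by (cases a) simp_all
    ultimately show ?thesis
      by (intro Cons.prems(1)[of "take k a # P'"]) (use k in simp_all)
  qed
qed


lemma blk_block_sums:
  assumes "is_comp (concat P)" "[] \<notin> set P"
  shows "blk (concat P) (block_sums P) = P"
  using assms
proof (induction P)
  case (Cons B R)
  define a where "a = B @ concat R"
  have "(LEAST k. sum_list (take k a) = sum_list B) = length B"
  proof (rule Least_equality)
    fix k assume k: "sum_list (take k a) = sum_list B"
    show "length B \<le> k"
    proof (rule ccontr)
      assume "\<not> length B \<le> k"
      then have "sum_list (take k a) < sum_list (take (length B) a)"
        using Cons.prems(1) by (intro sum_take_strict_mono) (simp_all add: a_def)
      then show False
        using k by (simp add: a_def)
    qed
  qed (simp add: a_def)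
  moreover have "is_comp (concat R)"
    using Cons.prems(1) by (simp add: is_comp_def)
  ultimately show ?case
    using Cons by (simp add: Let_def a_def)
qed simp

lemma block_sums_inj:
  assumes "is_comp (concat P)" "[] \<notin> set P" "[] \<notin> set Q"
    and "concat P = concat Q" "block_sums P = block_sums Q"
  shows "P = Q"
  using blk_block_sums[of P] blk_block_sums[of Q] assms by metis

lemma OtE_eq_empty_iff: "OtE B = {} \<longleftrightarrow> oe_free B"
  unfolding OtE_def oe_free_def successively_conv_nth
  by (auto simp: not_less_eq_eq) (metis One_nat_def Suc_pred' diff_Suc_1 not_less_eq)+

lemma OtE_subset: "OtE a \<subseteq> {0<..<length a}"
  unfolding OtE_def by auto

lemma OtE_append_low: "i < length B \<Longrightarrow> i \<in> OtE (B @ C) \<longleftrightarrow> i \<in> OtE B"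
  unfolding OtE_def by (auto simp: nth_append)

lemma OtE_append_high: "length B < i \<Longrightarrow> i \<in> OtE (B @ C) \<longleftrightarrow> i - length B \<in> OtE C"
  unfolding OtE_def by (auto simp: nth_append Suc_diff_Suc)

lemma cuts_Cons:
  assumes "R \<noteq> []"
  shows "cuts (B # R) = insert (length B) ((+) (length B) ` cuts R)"
proof
  show "cuts (B # R) \<subseteq> insert (length B) ((+) (length B) ` cuts R)"
  proof
    fix k assume "k \<in> cuts (B # R)"
    then obtain i where i: "0 < i" "i < Suc (length R)" "k = length (concat (take i (B # R)))"
      unfolding cuts_def by auto
    show "k \<in> insert (length B) ((+) (length B) ` cuts R)"
    proof (cases "i = 1")
      case False
      then obtain j where j: "i = Suc j" "0 < j"
        using i by (cases i) auto
      then have "length (concat (take j R)) \<in> cuts R"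
        unfolding cuts_def using i by auto
      then show ?thesis
        using i j by simp
    qed (use i in simp)
  qed
next
  show "insert (length B) ((+) (length B) ` cuts R) \<subseteq> cuts (B # R)"
  proof
    fix k assume "k \<in> insert (length B) ((+) (length B) ` cuts R)"
    then consider "k = length B" | j where "0 < j" "j < length R" "k = length B + length (concat (take j R))"
      unfolding cuts_def by auto
    then show "k \<in> cuts (B # R)"
    proof cases
      case 1
      then show ?thesis
        unfolding cuts_def using assms by (auto intro!: exI[of _ 1])
    next
      case 2
      then show ?thesis
        unfolding cuts_def by (auto intro!: exI[of _ "Suc j"])
    qed
  qed
qed

lemma OtE_append_subset_iff:
  "OtE (B @ D) \<subseteq> insert (length B) ((+) (length B) ` K) \<longleftrightarrow> OtE B = {} \<and> OtE D \<subseteq> K"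
proof
  assume sub: "OtE (B @ D) \<subseteq> insert (length B) ((+) (length B) ` K)"
  have "i \<notin> OtE B" for i
  proof
    assume i: "i \<in> OtE B"
    then have "i < length B"
      using OtE_subset by fastforce
    then show False
      using sub i OtE_append_low[of i B D] by auto
  qed
  moreover have "j \<in> K" if j: "j \<in> OtE D" for j
  proof -
    have "0 < j"
      using j OtE_subset by fastforce
    then have "length B + j \<in> OtE (B @ D)"
      using OtE_append_high[of B "length B + j" D] j by simp
    then show ?thesis
      using sub \<open>0 < j\<close> by auto
  qed
  ultimately show "OtE B = {} \<and> OtE D \<subseteq> K"
    by blast
next
  assume h: "OtE B = {} \<and> OtE D \<subseteq> K"
  show "OtE (B @ D) \<subseteq> insert (length B) ((+) (length B) ` K)"
  proof
    fix i assume i: "i \<in> OtE (B @ D)"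
    consider "i < length B" | "i = length B" | "length B < i"
      by linarith
    then show "i \<in> insert (length B) ((+) (length B) ` K)"
    proof cases
      case 1
      then show ?thesis
        using OtE_append_low i h by blast
    next
      case 3
      then have "i - length B \<in> K"
        using OtE_append_high i h by blast
      moreover have "i = length B + (i - length B)"
        using 3 by simp
      ultimately show ?thesis
        by blast
    qed simp
  qed
qed

lemma OtE_concat_subset_cuts_iff:
  assumes "[] \<notin> set P"
  shows "OtE (concat P) \<subseteq> cuts P \<longleftrightarrow> (\<forall>B\<in>set P. oe_free B)"
  using assms
proof (induction P)
  case (Cons B R)
  show ?case
  proof (cases "R = []")
    case True
    then show ?thesis
      by (simp add: cuts_def OtE_eq_empty_iff)
  next
    case False
    then show ?thesis
      using Cons by (simp add: cuts_Cons OtE_append_subset_iff OtE_eq_empty_iff)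
  qed
qed (simp add: OtE_def)

definition interval_sums :: "nat list \<Rightarrow> nat list \<Rightarrow> nat list" where
  "interval_sums C a = map (\<lambda>i. sum_list (take (C ! Suc i - C ! i) (drop (C ! i) a))) [0..<length C - 1]"

lemma sum_take_interval_sums:
  assumes "sorted C" "C ! 0 = 0" "j < length C"
  shows "sum_list (take j (interval_sums C a)) = sum_list (take (C ! j) a)"
  using assms(3)
proof (induction j)
  case (Suc j)
  have "C ! j \<le> C ! Suc j"
    using assms(1) Suc.prems by (simp add: sorted_iff_nth_mono)
  moreover have "[0..<length C - 1] ! j = j"
    using Suc.prems by simp
  ultimately show ?case
    using Suc sum_take_add[of "C ! j" "C ! Suc j" a]
    by (simp add: interval_sums_def take_Suc_conv_app_nth)
qed (simp add: assms(2))

lemma interval_sums_props: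
  assumes "is_comp a" "sorted_wrt (<) C" "C ! 0 = 0" "C ! m = length a" "length C = Suc m"
  shows "is_comp (interval_sums C a)" "sum_list (interval_sums C a) = sum_list a"
    "psums (interval_sums C a) = {sum_list (take (C ! j) a) |j. 0 < j \<and> j < m}"
proof -
  have C_less: "C ! i < C ! j" if "i < j" "j \<le> m" for i j
    using that assms(2,5) sorted_wrt_nth_less[of "(<)" C i j] by simp
  have len: "length (interval_sums C a) = m"
    using assms(5) by (simp add: interval_sums_def)
  have psum: "sum_list (take j (interval_sums C a)) = sum_list (take (C ! j) a)" if "j \<le> m" for j
    using sum_take_interval_sums[OF strict_sorted_imp_sorted[OF assms(2)] assms(3), of j a] assms(5) that
    by simp
  have "0 < interval_sums C a ! j" if "j < m" for j
  proof -
    have "C ! j < C ! Suc j"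
      using C_less[of j "Suc j"] that by simp
    moreover have "C ! Suc j \<le> C ! m"
      using C_less[of "Suc j" m] that by (cases "Suc j = m") auto
    ultimately show ?thesis
      using assms(1,4,5) that
      by (simp add: interval_sums_def sum_list_pos is_comp_take is_comp_drop)
  qed
  then show "is_comp (interval_sums C a)"
    unfolding is_comp_def using len by (metis in_set_conv_nth)
  show "sum_list (interval_sums C a) = sum_list a"
    using psum[of m] len assms(4) by simp
  show "psums (interval_sums C a) = {sum_list (take (C ! j) a) |j. 0 < j \<and> j < m}"
    unfolding psums_def len using psum by (metis (lifting) less_imp_le)
qed

lemma m_o_props:
  assumes "is_comp a"
  shows "is_comp (m_o a) \<and> sum_list (m_o a) = sum_list a \<and> psums (m_o a) = (\<lambda>k. sum_list (take k a)) ` OtE a"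
proof (cases "a = []")
  case True
  then show ?thesis
    by (simp add: m_o_def is_comp_def psums_def OtE_def)
next
  case False
  define ks where "ks = sorted_list_of_set (OtE a)"
  define C where "C = 0 # ks @ [length a]"
  define m where "m = length ks + 1"
  have "finite (OtE a)"
    using OtE_subset[of a] finite_subset by blast
  then have set_ks: "set ks = OtE a"
    unfolding ks_def by simp
  have "sorted_wrt (<) ks"
    unfolding ks_def by (rule strict_sorted_list_of_set)
  then have "sorted_wrt (<) C"
    using OtE_subset[of a] False set_ks unfolding C_def by (auto simp: sorted_wrt_append)
  moreover have "C ! 0 = 0" "C ! m = length a" "length C = Suc m"
    unfolding C_def m_def by (simp_all add: nth_append)
  moreover have "m_o a = interval_sums C a"
    using False unfolding m_o_def interval_sums_def Let_def C_def ks_def by simp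
  moreover have "{sum_list (take (C ! j) a) |j. 0 < j \<and> j < m} = (\<lambda>k. sum_list (take k a)) ` set ks"
  proof (intro equalityI subsetI)
    fix x assume "x \<in> {sum_list (take (C ! j) a) |j. 0 < j \<and> j < m}"
    then obtain i where "i < length ks" "x = sum_list (take (C ! Suc i) a)"
      unfolding m_def by (auto simp: gr0_conv_Suc)
    then show "x \<in> (\<lambda>k. sum_list (take k a)) ` set ks"
      by (simp add: C_def nth_append)
  next
    fix x assume "x \<in> (\<lambda>k. sum_list (take k a)) ` set ks"
    then obtain i where "i < length ks" "x = sum_list (take (ks ! i) a)"
      by (auto simp: in_set_conv_nth)
    then have "x = sum_list (take (C ! Suc i) a)" "0 < Suc i" "Suc i < m"
      unfolding C_def m_def by (simp_all add: nth_append)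
    then show "x \<in> {sum_list (take (C ! j) a) |j. 0 < j \<and> j < m}"
      by blast
  qed
  ultimately show ?thesis
    using interval_sums_props[OF assms, of C m] set_ks by simp
qed

lemma qleq_m_o_block_sums_iff:
  assumes "is_comp (concat P)" "[] \<notin> set P"
  shows "qleq (m_o (concat P)) (block_sums P) \<longleftrightarrow> (\<forall>B\<in>set P. oe_free B)"
proof -
  define a where "a = concat P"
  define \<sigma> where "\<sigma> k = sum_list (take k a)" for k
  have m_o: "is_comp (m_o a)" "sum_list (m_o a) = sum_list a" "psums (m_o a) = \<sigma> ` OtE a"
    using m_o_props assms(1) unfolding a_def \<sigma>_def by blast+
  have "qleq (m_o a) (block_sums P) \<longleftrightarrow> \<sigma> ` OtE a \<subseteq> \<sigma> ` cuts P"
    using m_o assms is_comp_block_sums sum_list_block_sums psums_block_sums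
    unfolding qleq_def a_def \<sigma>_def by simp
  also have "\<dots> \<longleftrightarrow> OtE a \<subseteq> cuts P"
  proof -
    have "OtE a \<subseteq> {..length a}" "cuts P \<subseteq> {..length a}"
      using OtE_subset cuts_subset[OF assms(2)] unfolding a_def by fastforce+
    then show ?thesis
      using inj_on_image_mem_iff[OF inj_on_sum_take[OF assms(1)]] unfolding a_def \<sigma>_def
      by (smt (verit, best) image_subset_iff subset_eq)
  qed
  finally show ?thesis
    using OtE_concat_subset_cuts_iff[OF assms(2)] unfolding a_def by simp
qed

definition seg_weight :: "nat list list \<Rightarrow> rat" where
  "seg_weight P = prod_list (map parity_weight P)"

lemma cc_eq_seg_weight: "cc a b = seg_weight (blk a b)"
  unfolding cc_def seg_weight_def parity_weight_def by simp

lemma seg_sum_single_nonzero: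
  assumes "concat P0 = x" "[] \<notin> set P0"
    and "\<And>P. concat P = x \<Longrightarrow> [] \<notin> set P \<Longrightarrow> P \<noteq> P0 \<Longrightarrow> F P = 0"
  shows "seg_sum x F = F P0"
proof -
  have "{P. concat P = x \<and> [] \<notin> set P} = set (segs x)"
    using mem_segs_iff by blast
  moreover have "P0 \<in> set (segs x)"
    using assms mem_segs_iff by blast
  moreover have "sum F (set (segs x) - {P0}) = 0"
    using assms(3) mem_segs_iff by (intro sum.neutral) auto
  ultimately show ?thesis
    unfolding seg_sum_eq_sum by (simp add: sum.remove)
qed

lemma Sb_eq_seg_sum:
  assumes "is_comp a"
  shows "Sb a d = seg_sum a (\<lambda>P. if (\<forall>B\<in>set P. oe_free B) \<and> d = block_sums P then seg_weight P else 0)"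
proof (cases "qleq d a")
  case True
  then obtain P0 where P0: "concat P0 = a" "[] \<notin> set P0" "d = block_sums P0"
    by (rule qleq_obtain_segmentation)
  have "seg_sum a (\<lambda>P. if (\<forall>B\<in>set P. oe_free B) \<and> d = block_sums P then seg_weight P else 0) =
      (if (\<forall>B\<in>set P0. oe_free B) \<and> d = block_sums P0 then seg_weight P0 else 0)"
    by (rule seg_sum_single_nonzero[OF P0(1,2)]) (use P0 assms block_sums_inj in auto)
  also have "\<dots> = Sb a d"
    using P0 assms True qleq_m_o_block_sums_iff[of P0] blk_block_sums[of P0]
    by (simp add: Sb_def cc_eq_seg_weight)
  finally show ?thesis ..
next
  case False
  then have "Sb a d = 0"
    by (simp add: Sb_def)
  moreover have "seg_sum a (\<lambda>P. if (\<forall>B\<in>set P. oe_free B) \<and> d = block_sums P then seg_weight P else 0) = 0"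
    by (rule seg_sum_zero) (use False assms qleq_block_sums in fastforce)
  ultimately show ?thesis
    by simp
qed

section \<open>The antipode of the shuffle basis\<close>

lemma antipode_Sb_seg_sum:
  assumes "is_comp a"
  shows "antipode (Sb a) c =
    seg_sum a (\<lambda>P. if \<forall>B\<in>set P. oe_free B then seg_weight P * antM (block_sums P) c else 0)"
proof -
  define S where "S = comps (sum_list c)"
  define F where "F d P = (if d = block_sums P then
      (if \<forall>B\<in>set P. oe_free B then seg_weight P * antM d c else 0) else 0)" for d P
  have "antipode (Sb a) c = (\<Sum>d\<in>S. seg_sum a (F d))"
    unfolding antipode_def S_def Sb_eq_seg_sum[OF assms] seg_sum_mult_right[symmetric] F_def
    by (intro sum.cong refl seg_sum_cong) auto
  also have "\<dots> = seg_sum a (\<lambda>P. \<Sum>d\<in>S. F d P)"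
    by (rule sum_seg_sum_swap)
  also have "\<dots> = seg_sum a (\<lambda>P. if \<forall>B\<in>set P. oe_free B then seg_weight P * antM (block_sums P) c else 0)"
  proof (rule seg_sum_cong)
    fix P assume P: "concat P = a" "[] \<notin> set P"
    then have "is_comp (block_sums P)"
      using assms is_comp_block_sums by blast
    then have "antM (block_sums P) c = 0" if "block_sums P \<notin> S"
      using that P coarse_qsh_Nil_right_eq_0 sum_list_block_sums[of P]
      by (simp add: S_def comps_def antM_eq_coarse_qsh)
    then show "(\<Sum>d\<in>S. F d P) = (if \<forall>B\<in>set P. oe_free B then seg_weight P * antM (block_sums P) c else 0)"
      using finite_comps unfolding F_def S_def by auto
  qed
  finally show ?thesis .
qed

lemma prod_eo_factor:
  "prod_list (map eo_factor P) = (if \<forall>B\<in>set P. eo_free B then (-1) ^ length P * seg_weight P else 0)"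
  by (induction P) (auto simp: seg_weight_def eo_factor_def)

lemma prod_oe_factor:
  "prod_list (map oe_factor R) = (if \<forall>B\<in>set R. oe_free B then (-1) ^ length (concat R) * seg_weight R else 0)"
  by (induction R) (auto simp: oe_factor_def seg_weight_def power_add)

lemma seg_weight_rev: "seg_weight (rev (map rev P)) = seg_weight P"
proof -
  have "parity_weight (rev B) = parity_weight B" for B
    by (simp add: parity_weight_def rev_filter[symmetric])
  then show ?thesis
    by (simp add: seg_weight_def rev_map[symmetric] prod_list.rev o_def)
qed

lemma antipode_Sb_rev:
  assumes "is_comp a"
  shows "antipode (Sb a) c = seg_sum (rev a) (\<lambda>P. prod_list (map eo_factor P) * coarse_qsh (block_sums P) [] c)"
proof -
  define G where "G P = (if \<forall>B\<in>set P. oe_free B then seg_weight P * antM (block_sums P) c else 0)" for P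
  have "antipode (Sb a) c = seg_sum a G"
    unfolding G_def by (rule antipode_Sb_seg_sum[OF assms])
  also have "\<dots> = seg_sum (rev a) (\<lambda>P. G (rev (map rev P)))"
    using seg_sum_rev[of "rev a" G] by simp
  also have "\<dots> = seg_sum (rev a) (\<lambda>P. prod_list (map eo_factor P) * coarse_qsh (block_sums P) [] c)"
  proof (rule seg_sum_cong)
    fix P :: "nat list list" assume P: "concat P = rev a" "[] \<notin> set P"
    have "is_comp (block_sums (rev (map rev P)))"
      using assms P by (intro is_comp_block_sums) (auto simp: rev_map rev_concat[symmetric])
    moreover have "rev (block_sums (rev (map rev P))) = block_sums P"
      by (simp add: rev_map o_def)
    ultimately have "antM (block_sums (rev (map rev P))) c = (-1) ^ length P * coarse_qsh (block_sums P) [] c"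
      by (simp add: antM_eq_coarse_qsh)
    then show "G (rev (map rev P)) = prod_list (map eo_factor P) * coarse_qsh (block_sums P) [] c"
      by (simp add: G_def prod_eo_factor oe_free_rev seg_weight_rev)
  qed
  finally show ?thesis .
qed

text \<open>Expanding the coarsenings of the block sums and regrouping turns the product of the
  factors \<open>eo_factor\<close> over the blocks of each coarse block into a segmentation sum, which the
  inversion formula evaluates.\<close>
lemma seg_sum_eo_factor_coarse_qsh:
  "seg_sum x (\<lambda>P. prod_list (map eo_factor P) * coarse_qsh (block_sums P) [] c) =
    seg_sum x (\<lambda>R. if c = block_sums R then prod_list (map oe_factor R) else 0)"
proof -
  define H where "H R = (if c = block_sums R then 1 else (0::rat))" for R
  have prod_concat: "prod_list (map f (concat QQ)) = prod_list (map (\<lambda>Q. prod_list (map f Q)) QQ)"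
    for f :: "nat list \<Rightarrow> rat" and QQ
    by (induction QQ) auto
  have "prod_list (map eo_factor P) * coarse_qsh (block_sums P) [] c =
      seg_sum P (\<lambda>QQ. H (map concat QQ) * prod_list (map (\<lambda>Q. prod_list (map eo_factor Q)) QQ))" for P
  proof -
    have "coarse_qsh (block_sums P) [] c = seg_sum P (\<lambda>QQ. H (map concat QQ))"
      unfolding coarse_qsh_Nil_right seg_sum_map H_def by (simp add: o_def sum_list_block_sums)
    then show ?thesis
      by (auto simp: seg_sum_mult_left[symmetric] prod_concat[symmetric] mult.commute
          intro!: seg_sum_cong)
  qed
  then have "seg_sum x (\<lambda>P. prod_list (map eo_factor P) * coarse_qsh (block_sums P) [] c) =
      seg_sum x (\<lambda>R. seg_sum_blocks R (\<lambda>QQ. H (map concat QQ) * prod_list (map (\<lambda>Q. prod_list (map eo_factor Q)) QQ)))"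
    by (simp add: seg_sum_seg_sum)
  also have "\<dots> = seg_sum x (\<lambda>R. H R * prod_list (map oe_factor R))"
    by (simp add: seg_sum_blocks_prod seg_sum_eo_factor)
  also have "\<dots> = seg_sum x (\<lambda>R. if c = block_sums R then prod_list (map oe_factor R) else 0)"
    by (rule seg_sum_cong) (simp add: H_def)
  finally show ?thesis .
qed

theorem mainTheorem2:
  fixes a :: "nat list"
  assumes "is_comp a"
  shows "antipode (Sb a) = (\<lambda>c. (-1) ^ length a * Sb (rev a) c)"
proof
  fix c
  have "antipode (Sb a) c = seg_sum (rev a) (\<lambda>P. prod_list (map eo_factor P) * coarse_qsh (block_sums P) [] c)"
    by (rule antipode_Sb_rev[OF assms])
  also have "\<dots> = seg_sum (rev a) (\<lambda>R. if c = block_sums R then prod_list (map oe_factor R) else 0)"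
    by (rule seg_sum_eo_factor_coarse_qsh)
  also have "\<dots> = (-1) ^ length a * seg_sum (rev a) (\<lambda>R.
      if (\<forall>B\<in>set R. oe_free B) \<and> c = block_sums R then seg_weight R else 0)"
    unfolding seg_sum_mult_left[symmetric] by (rule seg_sum_cong) (simp add: prod_oe_factor)
  also have "\<dots> = (-1) ^ length a * Sb (rev a) c"
    using assms by (simp add: Sb_eq_seg_sum)
  finally show "antipode (Sb a) c = (-1) ^ length a * Sb (rev a) c" .
qed

end
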